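(* Let $\Theta$ be an open saturated branch of a tableau in $\mathbf{TAB}_{\mathbf{IB}}$ with root formula $@_{i_0}\varphi_0$, let $\mathcal{M}^\Theta=(W^\Theta,R^\Theta,V^\Theta)$ be its model, $W^\Theta_r=\{w\in W^\Theta\mid wR^\Theta w\}$, and $\mathcal{M}^\Theta_B$ the bulldozed model of $\mathcal{M}^\Theta$. For every nominal $i\in W^\Theta_r$ and every formula $\varphi$ such that $@_i\varphi$ is a quasi-subformula of $@_{i_0}\varphi_0$, we have $\mathcal{M}^\Theta_B,(i,0)\models\varphi$ if and only if $\mathcal{M}^\Theta_B,(i,1)\models\varphi$.
   Context: Hybrid language: fix disjoint countably infinite sets $\mathbf{Prop}$ (propositional variables) and $\mathbf{Nom}$ (nominals). Formulas: $\varphi ::= p \mid i \mid \neg\varphi \mid \varphi\land\varphi \mid \Diamond\varphi \mid @_i\varphi$ with $p\in\mathbf{Prop}$, $i\in\mathbf{Nom}$; $\Box\varphi$ abbreviates $\neg\Diamond\neg\varphi$. A model $\mathcal{M}=(W,R,V)$ has $W$ nonempty, $R\subseteq W\times W$, and $V:\mathbf{Prop}\cup\mathbf{Nom}\to\mathcal{P}(W)$ with $V(i)=\{i^V\}$ a singleton for each nominal $i$. Satisfaction: $\mathcal{M},w\models p$ iff $w\in V(p)$; $\mathcal{M},w\models i$ iff $w=i^V$; Boolean clauses as usual; $\mathcal{M},w\models\Diamond\varphi$ iff there is $v$ with $wRv$ and $\mathcal{M},v\models\varphi$; $\mathcal{M},w\models @_i\varphi$ iff $\mathcal{M},i^V\models\varphi$.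 Tableau calculus $\mathbf{TAB}_{\mathbf{IB}}$. A tableau is a well-founded tree whose nodes are formulas of the form $@_i\varphi$; its root is a formula $@_i\varphi$ (the root formula) where $i$ does not occur in $\varphi$. A branch is a maximal path; $\varphi\in\Theta$ means $\varphi$ occurs on branch $\Theta$. Each branch is extended by applying the rules below to its formulas as often as possible, except that no further formula is added to a branch once either (i) every new formula generated by applying any rule already occurs on the branch, or (ii) the branch is closed, i.e. contains $@_i\varphi$ and $@_i\neg\varphi$ for some formula $\varphi$ and nominal $i$. Open means not closed. A branch is saturated if every new formula generated by applying some rule already occurs on it. An accessibility formula is a formula $@_i\Diamond j$ added by rule $[\Diamond]$ (with $j$ the new nominal). Rules (premises already on the branch; conclusions added to it): [$\neg\neg$] from $@_i\neg\neg\varphi$ add $@_i\varphi$; [$\land$] from $@_i(\varphi\land\psi)$ add $@_i\varphi$ and $@_i\psi$; [$\neg\land$] from $@_i\neg(\varphi\land\psi)$ split the branch into one extended by $@_i\neg\varphi$ and one extended by $@_i\neg\psi$; [$\Diamond$] from $@_i\Diamond\varphi$, which is not an accessibility formula, add $@_i\Diamond j$ and $@_j\varphi$ where $j$ is a nominal not occurring on the branch; this rule is applied at most once per formula, and only if $i$ is a quasi-urfather on the branch (defined below); [$\neg\Diamond$] from $@_i\neg\Diamond\varphi$ and $@_i\Diamond j$ add $@_j\neg\varphi$; [$\Box_{sym}$] from $@_i\Box\varphi$ and $@_j\Diamond i$ add $@_j\varphi$; [$@$] from $@_i@_j\varphi$ add $@_j\varphi$; [$\neg@$] from $@_i\neg@_j\varphi$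 add $@_j\neg\varphi$; [$Id$] from $@_i\varphi$, which is not an accessibility formula, and $@_i j$ add $@_j\varphi$; [$Ref$] for any nominal $i$ occurring on the branch add $@_i i$; ($\mathcal{I}$) for any nominal $i$ occurring on the branch add $@_i\neg\Diamond i$. Auxiliary notions for a branch $\Theta$. $@_i\varphi$ is a quasi-subformula of $@_j\psi$ if $\varphi$ is a subformula of $\psi$, or $\varphi=\neg\chi$ with $\chi$ a subformula of $\psi$. For a nominal $i$ occurring in $\Theta$, $T^\Theta(i)=\{\varphi \mid @_i\varphi\in\Theta$ and $@_i\varphi$ is a quasi-subformula of the root formula$\}$. Nominals $i,j$ are twins if $T^\Theta(i)=T^\Theta(j)$. $i\prec_\Theta j$ if $j$ was introduced by applying $[\Diamond]$ to a formula $@_i\Diamond\varphi$; $\prec_\Theta^*$ is its reflexive transitive closure. A nominal $i$ is a quasi-urfather on $\Theta$ if there are no twins $j\neq k$ with $j\prec_\Theta^* i$ and $k\prec_\Theta^* i$. The identity urfather $v_\Theta(i)$ of a nominal $i$ occurring in $\Theta$ is the earliest introduced nominal $j$ on $\Theta$ such that $j$ is a twin of $i$ and $j$ is a quasi-urfather; it may fail to exist, and $\mathrm{dom}(v_\Theta)$ denotes the set of nominals for which it exists. A nominal is called an identity urfather on $\Theta$ if it is the identity urfather of some nominal (equivalently $v_\Theta(i)=i$). The model $\mathcal{M}^\Theta=(W^\Theta,R^\Theta,V^\Theta)$ of an open saturated branch $\Theta$ with root formula $@_{i_0}\varphi_0$: $W^\Theta$ is the set of identity urfathers on $\Theta$;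 $R^\Theta=\{(v_\Theta(i),v_\Theta(j)) \mid @_i\Diamond j\in\Theta,\ i,j\in\mathrm{dom}(v_\Theta)\}\cup\{(v_\Theta(j),v_\Theta(i)) \mid @_i\Diamond j\in\Theta,\ i,j\in\mathrm{dom}(v_\Theta)\}$; $V^\Theta(p)=\{v_\Theta(i)\mid @_i p\in\Theta\}$ for $p\in\mathbf{Prop}$; for a nominal $i$, $V^\Theta(i)=\{v_\Theta(i)\}$ if $i\in\mathrm{dom}(v_\Theta)$ and $V^\Theta(i)=\{i_0\}$ otherwise. Bulldozed model: given a model $\mathcal{M}=(W,R,V)$, let $W_r=\{w\in W\mid wRw\}$, $W^-=W\setminus W_r$, and $W_B=W^-\cup\{(w,n)\mid w\in W_r,\ n\in\{0,1\}\}$. Let $\alpha:W_B\to W$ be $\alpha(w)=w$ for $w\in W^-$ and $\alpha((w,n))=w$. Define $wR_Bv$ iff one of: ($w\in W^-$ or $v\in W^-$) and $\alpha(w)R\alpha(v)$; or $w=(w',m)$, $v=(v',n)$, $w'\neq v'$ and $w'Rv'$; or $w\neq v$ and $\alpha(w)=\alpha(v)$. Define $V_B(p)=\{w\in W_B\mid\alpha(w)\in V(p)\}$ for $p\in\mathbf{Prop}$; for a nominal $i$, $V_B(i)=\{(i^V,0)\}$ if $i^V\in W_r$, and $V_B(i)=V(i)$ otherwise. The bulldozed model is $\mathcal{M}_B=(W_B,R_B,V_B)$; $\mathcal{M}^\Theta_B$ denotes the bulldozed model of $\mathcal{M}^\Theta$. *)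

theory Defs
  imports Main
begin

datatype fm = Pro nat | Nom nat | Neg fm | Con fm fm | Dia fm | At nat fm

abbreviation Box :: "fm \<Rightarrow> fm" where
  "Box \<phi> \<equiv> Neg (Dia (Neg \<phi>))"

fun subf :: "fm \<Rightarrow> fm set" where
  "subf (Pro p) = {Pro p}"
| "subf (Nom i) = {Nom i}"
| "subf (Neg \<phi>) = insert (Neg \<phi>) (subf \<phi>)"
| "subf (Con \<phi> \<psi>) = insert (Con \<phi> \<psi>) (subf \<phi> \<union> subf \<psi>)"
| "subf (Dia \<phi>) = insert (Dia \<phi>) (subf \<phi>)"
| "subf (At i \<phi>) = insert (At i \<phi>) (subf \<phi>)"

fun noms_list :: "fm \<Rightarrow> nat list" where
  "noms_list (Pro p) = []"
| "noms_list (Nom i) = [i]"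
| "noms_list (Neg \<phi>) = noms_list \<phi>"
| "noms_list (Con \<phi> \<psi>) = noms_list \<phi> @ noms_list \<psi>"
| "noms_list (Dia \<phi>) = noms_list \<phi>"
| "noms_list (At i \<phi>) = i # noms_list \<phi>"

text \<open>@_i phi is a quasi-subformula of @_j psi: depends only on phi and psi.\<close>
definition qsub :: "fm \<Rightarrow> fm \<Rightarrow> bool" where
  "qsub \<phi> \<psi> \<longleftrightarrow> \<phi> \<in> subf \<psi> \<or> (\<exists>\<chi>. \<phi> = Neg \<chi> \<and> \<chi> \<in> subf \<psi>)"

text \<open>A tableau node @_i phi is the pair (i, phi).  A branch (built so far) records
  its formulas in the order in which they were added, and the history of [Dia]
  applications: the premise @_i Dia phi together with the new nominal j.\<close>

type_synonym node = "nat \<times> fm"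

record branch =
  forms :: "node list"
  dias :: "(node \<times> nat) list"

definition onb :: "branch \<Rightarrow> node set" where
  "onb B = set (forms B)"

definition node_noms :: "node \<Rightarrow> nat list" where
  "node_noms n = fst n # noms_list (snd n)"

text \<open>Nominals of the branch in order of introduction (first occurrence).\<close>
definition nomlist :: "branch \<Rightarrow> nat list" where
  "nomlist B = remdups (concat (map node_noms (forms B)))"

definition noms_on :: "branch \<Rightarrow> nat set" where
  "noms_on B = set (nomlist B)"

definition accf :: "branch \<Rightarrow> node set" where
  "accf B = {(i, Dia (Nom j)) | i \<phi> j. ((i, Dia \<phi>), j) \<in> set (dias B)}"

definition precr :: "branch \<Rightarrow> (nat \<times> nat) set" where
  "precr B = {(i, j). \<exists>\<phi>. ((i, Dia \<phi>), j) \<in> set (dias B)}"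

definition Tset :: "node \<Rightarrow> branch \<Rightarrow> nat \<Rightarrow> fm set" where
  "Tset r B i = {\<phi>. (i, \<phi>) \<in> onb B \<and> qsub \<phi> (snd r)}"

definition twins :: "node \<Rightarrow> branch \<Rightarrow> nat \<Rightarrow> nat \<Rightarrow> bool" where
  "twins r B i j \<longleftrightarrow> Tset r B i = Tset r B j"

definition quasi_urfather :: "node \<Rightarrow> branch \<Rightarrow> nat \<Rightarrow> bool" where
  "quasi_urfather r B i \<longleftrightarrow>
     \<not> (\<exists>j k. j \<noteq> k \<and> twins r B j k \<and> (j, i) \<in> (precr B)\<^sup>* \<and> (k, i) \<in> (precr B)\<^sup>*)"

definition idu :: "node \<Rightarrow> branch \<Rightarrow> nat \<Rightarrow> nat option" where
  "idu r B i = (if i \<in> noms_on B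
                then find (\<lambda>j. twins r B i j \<and> quasi_urfather r B j) (nomlist B)
                else None)"

text \<open>A rule instance on branch B (with root r): a list of alternatives (one per
  resulting branch; each a list of formulas to add) and the record of a [Dia]
  application (empty list for all other rules).\<close>

inductive rinst :: "node \<Rightarrow> branch \<Rightarrow> node list list \<Rightarrow> (node \<times> nat) list \<Rightarrow> bool"
  for r :: node where
  negneg: "(i, Neg (Neg \<phi>)) \<in> onb B \<Longrightarrow> rinst r B [[(i, \<phi>)]] []"
| conj: "(i, Con \<phi> \<psi>) \<in> onb B \<Longrightarrow> rinst r B [[(i, \<phi>), (i, \<psi>)]] []"
| negconj: "(i, Neg (Con \<phi> \<psi>)) \<in> onb B \<Longrightarrow> rinst r B [[(i, Neg \<phi>)], [(i, Neg \<psi>)]] []"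
| dia: "(i, Dia \<phi>) \<in> onb B \<Longrightarrow> (i, Dia \<phi>) \<notin> accf B \<Longrightarrow>
        \<not> (\<exists>k. ((i, Dia \<phi>), k) \<in> set (dias B)) \<Longrightarrow> quasi_urfather r B i \<Longrightarrow>
        j \<notin> noms_on B \<Longrightarrow>
        rinst r B [[(i, Dia (Nom j)), (j, \<phi>)]] [((i, Dia \<phi>), j)]"
| negdia: "(i, Neg (Dia \<phi>)) \<in> onb B \<Longrightarrow> (i, Dia (Nom j)) \<in> onb B \<Longrightarrow>
        rinst r B [[(j, Neg \<phi>)]] []"
| boxsym: "(i, Box \<phi>) \<in> onb B \<Longrightarrow> (j, Dia (Nom i)) \<in> onb B \<Longrightarrow>
        rinst r B [[(j, \<phi>)]] []"
| at: "(i, At j \<phi>) \<in> onb B \<Longrightarrow> rinst r B [[(j, \<phi>)]] []"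
| negat: "(i, Neg (At j \<phi>)) \<in> onb B \<Longrightarrow> rinst r B [[(j, Neg \<phi>)]] []"
| ident: "(i, \<phi>) \<in> onb B \<Longrightarrow> (i, \<phi>) \<notin> accf B \<Longrightarrow> (i, Nom j) \<in> onb B \<Longrightarrow>
        rinst r B [[(j, \<phi>)]] []"
| refl: "i \<in> noms_on B \<Longrightarrow> rinst r B [[(i, Nom i)]] []"
| irr: "i \<in> noms_on B \<Longrightarrow> rinst r B [[(i, Neg (Dia (Nom i)))]] []"

definition step :: "node \<Rightarrow> branch \<Rightarrow> branch \<Rightarrow> bool" where
  "step r B B' \<longleftrightarrow> (\<exists>alts ds xs. rinst r B alts ds \<and> xs \<in> set alts \<and>
       B' = B\<lparr>forms := forms B @ xs, dias := dias B @ ds\<rparr>)"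

definition closed :: "branch \<Rightarrow> bool" where
  "closed B \<longleftrightarrow> (\<exists>i \<phi>. (i, \<phi>) \<in> onb B \<and> (i, Neg \<phi>) \<in> onb B)"

definition saturated :: "node \<Rightarrow> branch \<Rightarrow> bool" where
  "saturated r B \<longleftrightarrow>
     (\<forall>alts ds. rinst r B alts ds \<longrightarrow> (\<exists>xs \<in> set alts. set xs \<subseteq> onb B))"

text \<open>Branches (initial segments) of tableaux with root r: starting from the root,
  extend by rule applications; nothing is added once closed or saturated.\<close>
inductive reach :: "node \<Rightarrow> branch \<Rightarrow> bool" for r :: node where
  init: "reach r \<lparr>forms = [r], dias = []\<rparr>"
| ext: "reach r B \<Longrightarrow> \<not> closed B \<Longrightarrow> \<not> saturated r B \<Longrightarrow> step r B B' \<Longrightarrow> reach r B'"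

record 'w kmodel =
  mW :: "'w set"
  mR :: "('w \<times> 'w) set"
  mVP :: "nat \<Rightarrow> 'w set"
  mVN :: "nat \<Rightarrow> 'w"   \<comment> \<open>V(i) = {mVN i}\<close>

fun sat :: "'w kmodel \<Rightarrow> 'w \<Rightarrow> fm \<Rightarrow> bool" where
  "sat M w (Pro p) = (w \<in> mVP M p)"
| "sat M w (Nom i) = (w = mVN M i)"
| "sat M w (Neg \<phi>) = (\<not> sat M w \<phi>)"
| "sat M w (Con \<phi> \<psi>) = (sat M w \<phi> \<and> sat M w \<psi>)"
| "sat M w (Dia \<phi>) = (\<exists>v. (w, v) \<in> mR M \<and> sat M v \<phi>)"
| "sat M w (At i \<phi>) = sat M (mVN M i) \<phi>"

definition branch_model :: "node \<Rightarrow> branch \<Rightarrow> nat kmodel" where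
  "branch_model r B =
    \<lparr>mW = {j. \<exists>i. idu r B i = Some j},
     mR = {(a, b). \<exists>i j. (i, Dia (Nom j)) \<in> onb B \<and>
             ((idu r B i = Some a \<and> idu r B j = Some b) \<or>
              (idu r B j = Some a \<and> idu r B i = Some b))},
     mVP = (\<lambda>p. {a. \<exists>i. (i, Pro p) \<in> onb B \<and> idu r B i = Some a}),
     mVN = (\<lambda>i. case idu r B i of Some a \<Rightarrow> a | None \<Rightarrow> fst r)\<rparr>"

definition Wr :: "'w kmodel \<Rightarrow> 'w set" where
  "Wr M = {w \<in> mW M. (w, w) \<in> mR M}"

text \<open>Worlds of the bulldozed model: Inl w for w in W^-, Inr (w, n) for w in W_r, n in {0,1}.\<close>
definition alpha :: "'w + 'w \<times> nat \<Rightarrow> 'w" where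
  "alpha x = (case x of Inl w \<Rightarrow> w | Inr (w, n) \<Rightarrow> w)"

definition WB :: "'w kmodel \<Rightarrow> ('w + 'w \<times> nat) set" where
  "WB M = Inl ` (mW M - Wr M) \<union> {Inr (w, n) | w n. w \<in> Wr M \<and> n \<in> {0, 1}}"

definition bulldoze :: "'w kmodel \<Rightarrow> ('w + 'w \<times> nat) kmodel" where
  "bulldoze M =
    \<lparr>mW = WB M,
     mR = {(x, y). x \<in> WB M \<and> y \<in> WB M \<and>
             (((isl x \<or> isl y) \<and> (alpha x, alpha y) \<in> mR M)
              \<or> (\<exists>w' m v' n. x = Inr (w', m) \<and> y = Inr (v', n) \<and> w' \<noteq> v' \<and> (w', v') \<in> mR M)
              \<or> (x \<noteq> y \<and> alpha x = alpha y))},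
     mVP = (\<lambda>p. {x \<in> WB M. alpha x \<in> mVP M p}),
     mVN = (\<lambda>i. if mVN M i \<in> Wr M then Inr (mVN M i, 0) else Inl (mVN M i))\<rparr>"

end

theory Submission
  imports Defs
begin

text \<open>In the bulldozed model the two copies (i,0) and (i,1) of a reflexive world i see each
  other and have the same successors otherwise, and they satisfy the same propositional
  variables; so no formula can tell them apart unless one of its nominals names i.
  On an open saturated branch every nominal k of the root formula has an identity urfather w,
  and w is irreflexive in the branch model: a loop at w comes from some @_a Dia b with a and b
  twins of w, hence of k, and then the rules [Ref], [Id], (I) and [Neg Dia] derive both
  @_b k and @_b Neg k.  So nominals of the root formula never name a reflexive world.\<close>

lemma subf_trans: "\<phi> \<in> subf \<psi> \<Longrightarrow> subf \<phi> \<subseteq> subf \<psi>"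
  by (induction \<psi>) auto

lemma Nom_subf_noms_list: "Nom k \<in> subf \<phi> \<Longrightarrow> k \<in> set (noms_list \<phi>)"
  by (induction \<phi>) auto

lemma qsub_Nom_subf:
  assumes "qsub \<phi> \<psi>" and "Nom k \<in> subf \<phi>"
  shows "Nom k \<in> subf \<psi>"
  using assms subf_trans unfolding qsub_def by fastforce

lemma bulldoze_Inr_pair_edge:
  assumes "i \<in> Wr M" and "m \<in> {0, 1}" and "n \<in> {0, 1}" and "m \<noteq> n"
  shows "(Inr (i, m), Inr (i, n)) \<in> mR (bulldoze M)"
  using assms by (auto simp: bulldoze_def WB_def alpha_def)

lemma bulldoze_Inr_same_successors:
  assumes "i \<in> Wr M" and "m \<in> {0, 1}" and "n \<in> {0, 1}"
    and "v \<notin> {Inr (i, 0), Inr (i, 1)}"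
  shows "(Inr (i, m), v) \<in> mR (bulldoze M) \<longleftrightarrow> (Inr (i, n), v) \<in> mR (bulldoze M)"
  using assms by (auto simp: bulldoze_def WB_def alpha_def)

lemma sat_bulldoze_Inr_iff:
  assumes "i \<in> Wr M" and "\<forall>k. Nom k \<in> subf \<phi> \<longrightarrow> mVN M k \<noteq> i"
  shows "sat (bulldoze M) (Inr (i, 0)) \<phi> \<longleftrightarrow> sat (bulldoze M) (Inr (i, 1)) \<phi>"
  using assms(2)
proof (induction \<phi>)
  case (Pro p)
  then show ?case using assms(1) by (auto simp: bulldoze_def WB_def alpha_def)
next
  case (Nom k)
  then show ?case by (auto simp: bulldoze_def)
next
  case (Dia \<phi>)
  let ?sat = "sat (bulldoze M)" and ?R = "mR (bulldoze M)"
  from Dia have IH: "?sat (Inr (i, 0)) \<phi> \<longleftrightarrow> ?sat (Inr (i, 1)) \<phi>" by auto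
  have transfer: "?sat (Inr (i, n)) (Dia \<phi>)"
    if "?sat (Inr (i, m)) (Dia \<phi>)" "m \<in> {0, 1}" "n \<in> {0, 1}" "m \<noteq> n" for m n
  proof -
    from that(1) obtain v where v: "(Inr (i, m), v) \<in> ?R" "?sat v \<phi>" by auto
    show ?thesis
    proof (cases "v \<in> {Inr (i, 0), Inr (i, 1)}")
      case True
      with v(2) IH that(2) have "?sat (Inr (i, m)) \<phi>" by auto
      with bulldoze_Inr_pair_edge[OF assms(1) that(3,2)] that(4) show ?thesis by auto
    next
      case False
      with v bulldoze_Inr_same_successors[OF assms(1) that(2,3)] show ?thesis by auto
    qed
  qed
  show ?case using transfer[of 0 1] transfer[of 1 0] by auto
qed auto

lemma reach_root_and_fresh_dias:
  "reach r B \<Longrightarrow> r \<in> onb B \<and> (\<forall>x j. (x, j) \<in> set (dias B) \<longrightarrow> j \<notin> set (node_noms r))"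
proof (induction rule: reach.induct)
  case init
  then show ?case by (simp add: onb_def)
next
  case (ext B B')
  have root_noms: "set (node_noms r) \<subseteq> noms_on B"
    using ext.IH by (auto simp: onb_def noms_on_def nomlist_def)
  from ext.hyps(4) obtain alts ds xs where st: "rinst r B alts ds" "xs \<in> set alts"
    "B' = B\<lparr>forms := forms B @ xs, dias := dias B @ ds\<rparr>" unfolding step_def by blast
  from st(1) have "\<forall>x j. (x, j) \<in> set ds \<longrightarrow> j \<notin> noms_on B"
    by (cases rule: rinst.cases) auto
  then show ?case using st(3) ext.IH root_noms by (auto simp: onb_def)
qed

lemma onb_nom_on_branch: "(a, \<psi>) \<in> onb B \<Longrightarrow> a \<in> noms_on B"
  by (force simp: onb_def noms_on_def nomlist_def node_noms_def)

lemma root_nominal_on_branch: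
  assumes "reach r B" and "k \<in> set (node_noms r)"
  shows "k \<in> noms_on B"
proof -
  have "r \<in> set (forms B)" using reach_root_and_fresh_dias[OF assms(1)] by (simp add: onb_def)
  with assms(2) show ?thesis by (auto simp: noms_on_def nomlist_def)
qed

lemma saturated_single_conclusion: "saturated r B \<Longrightarrow> rinst r B [[x]] [] \<Longrightarrow> x \<in> onb B"
  unfolding saturated_def by fastforce

lemma idu_twins: "idu r B i = Some w \<Longrightarrow> twins r B i w"
  by (auto simp: idu_def find_Some_iff split: if_splits)

lemma twins_transfer_qsub:
  "twins r B a b \<Longrightarrow> qsub \<phi> (snd r) \<Longrightarrow> (a, \<phi>) \<in> onb B \<Longrightarrow> (b, \<phi>) \<in> onb B"
  by (auto simp: twins_def Tset_def)

text \<open>Root nominals are never introduced by [Dia], so they have no \<prec>-predecessors.\<close>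

lemma root_nominal_quasi_urfather:
  assumes "reach r B" and "k \<in> set (node_noms r)"
  shows "quasi_urfather r B k"
proof -
  have "(j, k) \<notin> precr B" for j
    using reach_root_and_fresh_dias[OF assms(1)] assms(2) by (auto simp: precr_def)
  then have "(j, k) \<in> (precr B)\<^sup>* \<Longrightarrow> j = k" for j
    by (auto elim: rtranclE)
  then show ?thesis unfolding quasi_urfather_def by blast
qed

lemma idu_root_nominal:
  assumes "reach r B" and "k \<in> set (node_noms r)"
  obtains w where "idu r B k = Some w"
proof -
  have "k \<in> noms_on B" "quasi_urfather r B k"
    using root_nominal_on_branch root_nominal_quasi_urfather assms by auto
  then have "idu r B k \<noteq> None"
    by (auto simp: idu_def find_None_iff twins_def noms_on_def)
  then show ?thesis using that by auto
qed

lemma branch_model_root_nominal_irreflexive: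
  assumes reach: "reach r B" and open_branch: "\<not> closed B" and sat: "saturated r B"
    and k: "Nom k \<in> subf (snd r)" and w: "idu r B k = Some w"
  shows "(w, w) \<notin> mR (branch_model r B)"
proof
  assume "(w, w) \<in> mR (branch_model r B)"
  then obtain a b where ab: "(a, Dia (Nom b)) \<in> onb B" "idu r B a = Some w" "idu r B b = Some w"
    by (auto simp: branch_model_def)
  have kq: "qsub (Nom k) (snd r)" using k by (simp add: qsub_def)
  have k_on: "k \<in> noms_on B" using w by (simp add: idu_def split: if_splits)
  have kk: "(k, Nom k) \<in> onb B" using saturated_single_conclusion[OF sat rinst.refl[OF k_on]] .
  have wk: "(w, Nom k) \<in> onb B" using twins_transfer_qsub[OF idu_twins[OF w] kq kk] .
  have "twins r B w a" "twins r B w b"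
    using idu_twins[OF ab(2)] idu_twins[OF ab(3)] by (auto simp: twins_def)
  then have ak: "(a, Nom k) \<in> onb B" and bk: "(b, Nom k) \<in> onb B"
    using twins_transfer_qsub kq wk by blast+
  have no_acc: "(x, Nom y) \<notin> accf B" "(x, Neg \<psi>) \<notin> accf B" for x y \<psi>
    by (auto simp: accf_def)
  have "(a, Nom a) \<in> onb B"
    using saturated_single_conclusion[OF sat rinst.refl[OF onb_nom_on_branch[OF ab(1)]]] .
  then have "(k, Nom a) \<in> onb B"
    using saturated_single_conclusion[OF sat rinst.ident[OF _ no_acc(1) ak]] by blast
  moreover have "(k, Neg (Dia (Nom k))) \<in> onb B"
    using saturated_single_conclusion[OF sat rinst.irr[OF k_on]] .
  ultimately have "(a, Neg (Dia (Nom k))) \<in> onb B"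
    using saturated_single_conclusion[OF sat rinst.ident[OF _ no_acc(2)]] by blast
  then have "(b, Neg (Nom k)) \<in> onb B"
    using saturated_single_conclusion[OF sat rinst.negdia[OF _ ab(1)]] by blast
  with bk open_branch show False by (auto simp: closed_def)
qed

theorem lemma12:
  fixes i0 :: nat and \<phi>0 :: fm and B :: branch and i :: nat and \<phi> :: fm
  assumes "i0 \<notin> set (noms_list \<phi>0)"
    and "reach (i0, \<phi>0) B"
    and "\<not> closed B"
    and "saturated (i0, \<phi>0) B"
    and "i \<in> Wr (branch_model (i0, \<phi>0) B)"
    and "qsub \<phi> \<phi>0"
  shows "sat (bulldoze (branch_model (i0, \<phi>0) B)) (Inr (i, 0)) \<phi> \<longleftrightarrow>
         sat (bulldoze (branch_model (i0, \<phi>0) B)) (Inr (i, 1)) \<phi>"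
proof (rule sat_bulldoze_Inr_iff[OF assms(5)], intro allI impI)
  fix k assume "Nom k \<in> subf \<phi>"
  then have k: "Nom k \<in> subf \<phi>0" using qsub_Nom_subf assms(6) by blast
  then have "k \<in> set (node_noms (i0, \<phi>0))"
    using Nom_subf_noms_list by (simp add: node_noms_def)
  then obtain w where w: "idu (i0, \<phi>0) B k = Some w"
    using idu_root_nominal assms(2) by blast
  then have "mVN (branch_model (i0, \<phi>0) B) k = w"
    by (simp add: branch_model_def)
  moreover have "w \<notin> Wr (branch_model (i0, \<phi>0) B)"
    using branch_model_root_nominal_irreflexive[OF assms(2-4) _ w] k by (simp add: Wr_def)
  ultimately show "mVN (branch_model (i0, \<phi>0) B) k \<noteq> i" using assms(5) by auto
qed

end
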